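(* $\mathsf{FOR}$ does not express Epstein relations: it is not the case that for all $\varphi,\psi\in\mathsf{FOR}$ there is $\chi\in\mathsf{FOR}$ such that for every Epstein relation $\mathfrak{R}$, $\langle\varphi,\psi\rangle\in\mathfrak{R}$ iff $\mathfrak{R}\vDash\chi$. In particular, there is no $\chi\in\mathsf{FOR}$ such that for every Epstein relation $\mathfrak{R}$, $\mathfrak{R}\vDash\chi$ iff $\langle\top,\bot\rangle\in\mathfrak{R}$.
   Context: Language: propositional letters $\Phi=\{p_0,p_1,\dots\}$; connectives $\neg$, $\lor,\wedge,\to,\leftrightarrow,\vartriangle,\looparrowright$; $\mathsf{FOR}$ the set of all formulas; $\top:=p_0\lor\neg p_0$, $\bot:=\neg(p_0\lor\neg p_0)$. An Epstein model is $\langle v,\mathfrak{R}\rangle$ with $v:\Phi\to\{0,1\}$ and $\mathfrak{R}\subseteq\mathsf{FOR}^2$ (an Epstein relation); truth: letters via $v$, boolean connectives classical, $\langle v,\mathfrak{R}\rangle\vDash\varphi\vartriangle\psi$ iff both true and $\langle\varphi,\psi\rangle\in\mathfrak{R}$; $\langle v,\mathfrak{R}\rangle\vDash\varphi\looparrowright\psi$ iff $\varphi\to\psi$ true and $\langle\varphi,\psi\rangle\in\mathfrak{R}$. $\mathfrak{R}\vDash\chi$ iff $\langle v,\mathfrak{R}\rangle\vDash\chi$ for every valuation $v$. *)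

theory Defs
  imports Main
begin

text \<open>Formulas over propositional letters p_0, p_1, ... (indexed by nat), with
  negation, disjunction, conjunction, implication, biconditional,
  the Epstein conjunction (Tri) and the Epstein implication (Loop).\<close>
datatype form =
    Atom nat
  | Neg form
  | Disj form form
  | Conj form form
  | Imp form form
  | Iff form form
  | Tri form form
  | Loop form form

definition top_form :: form where
  "top_form = Disj (Atom 0) (Neg (Atom 0))"

definition bot_form :: form where
  "bot_form = Neg (Disj (Atom 0) (Neg (Atom 0)))"

text \<open>Truth in an Epstein model (v, R); R is an arbitrary Epstein relation,
  i.e. any set of pairs of formulas.\<close>
fun sat :: "(nat \<Rightarrow> bool) \<Rightarrow> (form \<times> form) set \<Rightarrow> form \<Rightarrow> bool" where
  "sat v R (Atom n) = v n"
| "sat v R (Neg a) = (\<not> sat v R a)"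
| "sat v R (Disj a b) = (sat v R a \<or> sat v R b)"
| "sat v R (Conj a b) = (sat v R a \<and> sat v R b)"
| "sat v R (Imp a b) = (sat v R a \<longrightarrow> sat v R b)"
| "sat v R (Iff a b) = (sat v R a \<longleftrightarrow> sat v R b)"
| "sat v R (Tri a b) = (sat v R a \<and> sat v R b \<and> (a, b) \<in> R)"
| "sat v R (Loop a b) = ((sat v R a \<longrightarrow> sat v R b) \<and> (a, b) \<in> R)"

definition rel_valid :: "(form \<times> form) set \<Rightarrow> form \<Rightarrow> bool" where
  "rel_valid R chi \<longleftrightarrow> (\<forall>v. sat v R chi)"

end

theory Submission
  imports Defs
begin

text \<open>If \<open>\<phi>\<close> is true and \<open>\<psi>\<close> false in every Epstein model, then both \<open>\<phi> \<vartriangle> \<psi>\<close> and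
  \<open>\<phi> \<looparrowright> \<psi>\<close> are false whatever the relation, so no formula can detect whether
  \<open>(\<phi>, \<psi>)\<close> belongs to it. Hence validity of a formula is insensitive to that
  pair, and the pair \<open>(\<top>, \<bot>)\<close> is an instance.\<close>

lemma sat_Diff_refuted_pair:
  assumes "\<And>v R. sat v R \<phi>" and "\<And>v R. \<not> sat v R \<psi>"
  shows "sat v (R - {(\<phi>, \<psi>)}) \<chi> = sat v R \<chi>"
  by (induction \<chi>) (use assms in auto)

lemma rel_valid_not_expresses_refuted_pair:
  assumes "\<And>v R. sat v R \<phi>" and "\<And>v R. \<not> sat v R \<psi>"
  shows "\<not> (\<exists>\<chi>. \<forall>R. rel_valid R \<chi> \<longleftrightarrow> (\<phi>, \<psi>) \<in> R)"
proof
  assume "\<exists>\<chi>. \<forall>R. rel_valid R \<chi> \<longleftrightarrow> (\<phi>, \<psi>) \<in> R"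
  then obtain \<chi> where expresses: "\<And>R. rel_valid R \<chi> \<longleftrightarrow> (\<phi>, \<psi>) \<in> R" by blast
  have "rel_valid UNIV \<chi>" using expresses by simp
  then have "rel_valid (UNIV - {(\<phi>, \<psi>)}) \<chi>"
    by (simp add: rel_valid_def sat_Diff_refuted_pair assms)
  then show False using expresses by simp
qed

lemma sat_top_form: "sat v R top_form"
  by (simp add: top_form_def)

lemma not_sat_bot_form: "\<not> sat v R bot_form"
  by (simp add: bot_form_def)

theorem mainTheorem15:
  shows "\<not> (\<forall>\<phi> \<psi>. \<exists>\<chi>. \<forall>R. (\<phi>, \<psi>) \<in> R \<longleftrightarrow> rel_valid R \<chi>)
         \<and> \<not> (\<exists>\<chi>. \<forall>R. rel_valid R \<chi> \<longleftrightarrow> (top_form, bot_form) \<in> R)"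
proof -
  have top_bot: "\<not> (\<exists>\<chi>. \<forall>R. rel_valid R \<chi> \<longleftrightarrow> (top_form, bot_form) \<in> R)"
    by (rule rel_valid_not_expresses_refuted_pair[OF sat_top_form not_sat_bot_form])
  then have "\<not> (\<forall>\<phi> \<psi>. \<exists>\<chi>. \<forall>R. (\<phi>, \<psi>) \<in> R \<longleftrightarrow> rel_valid R \<chi>)"
    by metis
  with top_bot show ?thesis by blast
qed

end
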